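(* Let $(D,\mathrm{left},\mathrm{right})$ be an interval domain and $p,q\in\max(D)$. (i) If $S\subseteq[p,\cdot]$ is directed, then $\mathrm{right}(\bigsqcup S)=\bigwedge_{s\in S}\mathrm{right}(s)$, the infimum taken in $(\max(D),\le)$. (ii) If $S\subseteq[\cdot,q]$ is directed, then $\mathrm{left}(\bigsqcup S)=\bigvee_{s\in S}\mathrm{left}(s)$, the supremum taken in $(\max(D),\le)$.
   Context: For a poset $(P,\sqsubseteq)$: directed sets are nonempty sets in which any two elements have an upper bound in the set; $\bigsqcup S$ is the supremum; $x\ll y$ iff for every directed $S\subseteq P$ with a supremum, $y\sqsubseteq\bigsqcup S$ implies $x\sqsubseteq s$ for some $s\in S$; $\Uparrow x=\{a: x\ll a\}$, $\Downarrow x=\{a:a\ll x\}$. $P$ is continuous if there is $B\subseteq P$ such that for each $x$, $B\cap\Downarrow x$ contains a directed set with supremum $x$; a continuous dcpo is a continuous poset in which every directed set has a supremum. $\max(P)$ is the set of maximal elements, $x\sqcap y$ the infimum of $\{x,y\}$. The Scott topology consists of upper sets $U$ such that $\bigsqcup S\in U$ implies $S\cap U\ne\emptyset$ for directed $S$. An interval poset is a poset $D$ with functions $\mathrm{left},\mathrm{right}:D\to\max(D)$ such that (only named infima are assumed to exist): (i) $x=\mathrm{left}(x)\sqcap\mathrm{right}(x)$ for all $x$; (ii) if $\mathrm{right}(x)=\mathrm{left}(y)$ then $\mathrm{left}(x\sqcap y)=\mathrm{left}(x)$ and $\mathrm{right}(x\sqcap y)=\mathrm{right}(y)$; (iii)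 for $p\in\max(D)$ with $x\sqsubseteq p$: $\mathrm{left}(\mathrm{left}(x)\sqcap p)=\mathrm{left}(x)$, $\mathrm{right}(\mathrm{left}(x)\sqcap p)=p$, $\mathrm{left}(p\sqcap\mathrm{right}(x))=p$, $\mathrm{right}(p\sqcap\mathrm{right}(x))=\mathrm{right}(x)$. On $\max(D)$ define $a\le b$ iff $a=\mathrm{left}(z)$, $b=\mathrm{right}(z)$ for some $z\in D$; this is a partial order. For $p,q\in\max(D)$ let $[p,\cdot]=\mathrm{left}^{-1}(p)$ and $[\cdot,q]=\mathrm{right}^{-1}(q)$, regarded as subposets of $D$. An interval domain is an interval poset $(D,\mathrm{left},\mathrm{right})$ such that $D$ is a continuous dcpo and: (i) if $p\in\Uparrow x\cap\max(D)$ then $\Uparrow(\mathrm{left}(x)\sqcap p)\ne\emptyset$ and $\Uparrow(p\sqcap\mathrm{right}(x))\ne\emptyset$; (ii) for all $x\in D$ the following are equivalent: (a) $\Uparrow x\ne\emptyset$; (b) for all $y\in[\mathrm{left}(x),\cdot]$ with $y\sqsubseteq x$, $y\ll\mathrm{right}(y)$ in the poset $[\cdot,\mathrm{right}(y)]$; (c) for all $y\in[\cdot,\mathrm{right}(x)]$ with $y\sqsubseteq x$, $y\ll\mathrm{left}(y)$ in the poset $[\mathrm{left}(y),\cdot]$; (iii)(a) for every directed $S\subseteq[p,\cdot]$, $\mathrm{left}(\bigsqcup S)=p$ and $\mathrm{right}(\bigsqcup S)=\mathrm{right}(\bigsqcup T)$ for every directed $T\subseteq[q,\cdot]$ with $\mathrm{right}(T)=\mathrm{right}(S)$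 (images); (iii)(b) for every directed $S\subseteq[\cdot,q]$, $\mathrm{right}(\bigsqcup S)=q$ and $\mathrm{left}(\bigsqcup S)=\mathrm{left}(\bigsqcup T)$ for every directed $T\subseteq[\cdot,p]$ with $\mathrm{left}(T)=\mathrm{left}(S)$; (iv) for all $x\in D$, $\{y\in\max(D): x\sqsubseteq y\}$ is compact in the relative Scott topology. *)

theory Defs
  imports Main
begin

text \<open>The poset D is modelled as a type of class order (D = UNIV).
  Subposets are given by carrier sets P, with the induced order.\<close>

definition directed :: "'a::order set \<Rightarrow> bool" where
  "directed S \<longleftrightarrow> S \<noteq> {} \<and> (\<forall>x\<in>S. \<forall>y\<in>S. \<exists>z\<in>S. x \<le> z \<and> y \<le> z)"

definition is_lub_in :: "'a::order set \<Rightarrow> 'a set \<Rightarrow> 'a \<Rightarrow> bool" where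
  "is_lub_in P S u \<longleftrightarrow> u \<in> P \<and> (\<forall>s\<in>S. s \<le> u) \<and> (\<forall>v\<in>P. (\<forall>s\<in>S. s \<le> v) \<longrightarrow> u \<le> v)"

definition is_glb_in :: "'a::order set \<Rightarrow> 'a set \<Rightarrow> 'a \<Rightarrow> bool" where
  "is_glb_in P S u \<longleftrightarrow> u \<in> P \<and> (\<forall>s\<in>S. u \<le> s) \<and> (\<forall>v\<in>P. (\<forall>s\<in>S. v \<le> s) \<longrightarrow> v \<le> u)"

definition dsup :: "'a::order set \<Rightarrow> 'a" where
  "dsup S = (THE u. is_lub_in UNIV S u)"

text \<open>infimum of {x,y} in D (only meaningful when it exists)\<close>
definition has_meet :: "'a::order \<Rightarrow> 'a \<Rightarrow> bool" where
  "has_meet x y \<longleftrightarrow> (\<exists>m. is_glb_in UNIV {x, y} m)"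

definition meet :: "'a::order \<Rightarrow> 'a \<Rightarrow> 'a" where
  "meet x y = (THE m. is_glb_in UNIV {x, y} m)"

definition way_below_in :: "'a::order set \<Rightarrow> 'a \<Rightarrow> 'a \<Rightarrow> bool" where
  "way_below_in P x y \<longleftrightarrow>
     (\<forall>S. S \<subseteq> P \<longrightarrow> directed S \<longrightarrow>
        (\<forall>u. is_lub_in P S u \<longrightarrow> y \<le> u \<longrightarrow> (\<exists>s\<in>S. x \<le> s)))"

definition way_below :: "'a::order \<Rightarrow> 'a \<Rightarrow> bool" where
  "way_below x y \<longleftrightarrow> way_below_in UNIV x y"

definition Uparrow :: "'a::order \<Rightarrow> 'a set" where
  "Uparrow x = {a. way_below x a}"

definition Downarrow :: "'a::order \<Rightarrow> 'a set" where
  "Downarrow x = {a. way_below a x}"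

definition continuous_poset :: "'a::order set \<Rightarrow> bool" where
  "continuous_poset P \<longleftrightarrow>
     (\<exists>B\<subseteq>P. \<forall>x\<in>P. \<exists>S. S \<subseteq> B \<inter> Downarrow x \<and> directed S \<and> is_lub_in P S x)"

definition dcpo :: "'a::order set \<Rightarrow> bool" where
  "dcpo P \<longleftrightarrow> (\<forall>S. S \<subseteq> P \<longrightarrow> directed S \<longrightarrow> (\<exists>u. is_lub_in P S u))"

definition maxD :: "'a::order set" where
  "maxD = {x. \<forall>y. x \<le> y \<longrightarrow> y = x}"

definition scott_open :: "'a::order set \<Rightarrow> bool" where
  "scott_open U \<longleftrightarrow> (\<forall>x y. x \<in> U \<longrightarrow> x \<le> y \<longrightarrow> y \<in> U) \<and>
     (\<forall>S. directed S \<longrightarrow> dsup S \<in> U \<longrightarrow> S \<inter> U \<noteq> {})"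

definition scott_compact :: "'a::order set \<Rightarrow> bool" where
  "scott_compact K \<longleftrightarrow>
     (\<forall>\<U>. (\<forall>U\<in>\<U>. scott_open U) \<longrightarrow> K \<subseteq> \<Union>\<U> \<longrightarrow> (\<exists>\<F>\<subseteq>\<U>. finite \<F> \<and> K \<subseteq> \<Union>\<F>))"

definition interval_poset :: "('a::order \<Rightarrow> 'a) \<Rightarrow> ('a \<Rightarrow> 'a) \<Rightarrow> bool" where
  "interval_poset left right \<longleftrightarrow>
     (\<forall>x. left x \<in> maxD \<and> right x \<in> maxD) \<and>
     (\<forall>x. is_glb_in UNIV {left x, right x} x) \<and>
     (\<forall>x y. right x = left y \<longrightarrow>
        has_meet x y \<and> left (meet x y) = left x \<and> right (meet x y) = right y) \<and>
     (\<forall>x p. p \<in> maxD \<longrightarrow> x \<le> p \<longrightarrow>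
        has_meet (left x) p \<and> left (meet (left x) p) = left x \<and> right (meet (left x) p) = p \<and>
        has_meet p (right x) \<and> left (meet p (right x)) = p \<and> right (meet p (right x)) = right x)"

definition max_le :: "('a::order \<Rightarrow> 'a) \<Rightarrow> ('a \<Rightarrow> 'a) \<Rightarrow> 'a \<Rightarrow> 'a \<Rightarrow> bool" where
  "max_le left right a b \<longleftrightarrow> a \<in> maxD \<and> b \<in> maxD \<and> (\<exists>z. a = left z \<and> b = right z)"

definition interval_domain :: "('a::order \<Rightarrow> 'a) \<Rightarrow> ('a \<Rightarrow> 'a) \<Rightarrow> bool" where
  "interval_domain (left::'a::order \<Rightarrow> 'a) right \<longleftrightarrow>
     interval_poset left right \<and> continuous_poset (UNIV::'a set) \<and> dcpo (UNIV::'a set) \<and>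
     \<comment> \<open>(i)\<close>
     (\<forall>x p. p \<in> Uparrow x \<inter> maxD \<longrightarrow>
        Uparrow (meet (left x) p) \<noteq> {} \<and> Uparrow (meet p (right x)) \<noteq> {}) \<and>
     \<comment> \<open>(ii)\<close>
     (\<forall>x. (Uparrow x \<noteq> {} \<longleftrightarrow>
            (\<forall>y. left y = left x \<longrightarrow> y \<le> x \<longrightarrow>
               way_below_in (right -` {right y}) y (right y))) \<and>
          (Uparrow x \<noteq> {} \<longleftrightarrow>
            (\<forall>y. right y = right x \<longrightarrow> y \<le> x \<longrightarrow>
               way_below_in (left -` {left y}) y (left y)))) \<and>
     \<comment> \<open>(iii)(a)\<close>
     (\<forall>p\<in>maxD. \<forall>S. S \<subseteq> left -` {p} \<longrightarrow> directed S \<longrightarrow>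
        left (dsup S) = p \<and>
        (\<forall>q\<in>maxD. \<forall>T. T \<subseteq> left -` {q} \<longrightarrow> directed T \<longrightarrow> right ` T = right ` S \<longrightarrow>
           right (dsup S) = right (dsup T))) \<and>
     \<comment> \<open>(iii)(b)\<close>
     (\<forall>q\<in>maxD. \<forall>S. S \<subseteq> right -` {q} \<longrightarrow> directed S \<longrightarrow>
        right (dsup S) = q \<and>
        (\<forall>p\<in>maxD. \<forall>T. T \<subseteq> right -` {p} \<longrightarrow> directed T \<longrightarrow> left ` T = left ` S \<longrightarrow>
           left (dsup S) = left (dsup T))) \<and>
     \<comment> \<open>(iv)\<close>
     (\<forall>x::'a. scott_compact {y \<in> maxD. x \<le> y})"

definition max_inf :: "('a::order \<Rightarrow> 'a) \<Rightarrow> ('a \<Rightarrow> 'a) \<Rightarrow> 'a set \<Rightarrow> 'a \<Rightarrow> bool" where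
  "max_inf left right A m \<longleftrightarrow> m \<in> maxD \<and> (\<forall>a\<in>A. max_le left right m a) \<and>
     (\<forall>n\<in>maxD. (\<forall>a\<in>A. max_le left right n a) \<longrightarrow> max_le left right n m)"

definition max_sup :: "('a::order \<Rightarrow> 'a) \<Rightarrow> ('a \<Rightarrow> 'a) \<Rightarrow> 'a set \<Rightarrow> 'a \<Rightarrow> bool" where
  "max_sup left right A m \<longleftrightarrow> m \<in> maxD \<and> (\<forall>a\<in>A. max_le left right a m) \<and>
     (\<forall>n\<in>maxD. (\<forall>a\<in>A. max_le left right a n) \<longrightarrow> max_le left right m n)"

end

theory Submission
  imports Defs
begin

text \<open>Every s \<in> S lies below \<Squnion>S and hence below right(\<Squnion>S), which makes right(\<Squnion>S) a lower
  bound of the right endpoints. If n is another lower bound, replacing each s by the interval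
  [n, right s] yields a directed set T in the fibre [n,\<cdot>] with the same right endpoints as S;
  axiom (iii)(a) then gives left(\<Squnion>T) = n and right(\<Squnion>T) = right(\<Squnion>S), so \<Squnion>T witnesses
  n \<le> right(\<Squnion>S). Part (ii) is part (i) for the interval domain with left and right swapped.\<close>

lemma meet_eqI: "is_glb_in UNIV {a, b} m \<Longrightarrow> meet a b = m"
  unfolding meet_def is_glb_in_def by (rule the_equality) (auto intro: order_antisym)

lemma dsup_eqI: "is_lub_in UNIV S u \<Longrightarrow> dsup S = u"
  unfolding dsup_def is_lub_in_def by (rule the_equality) (auto intro: order_antisym)

lemma meet_commute: "meet a b = meet b a"
  unfolding meet_def by (simp add: insert_commute)

lemma has_meet_commute: "has_meet a b = has_meet b a"
  unfolding has_meet_def by (simp add: insert_commute)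

lemma meet_lower1: "has_meet a b \<Longrightarrow> meet a b \<le> a"
  unfolding has_meet_def using meet_eqI unfolding is_glb_in_def by blast

lemma dsup_upper:
  fixes S :: "'a::order set"
  assumes "dcpo (UNIV :: 'a set)" and "directed S" and "s \<in> S"
  shows "s \<le> dsup S"
proof -
  obtain u where u: "is_lub_in UNIV S u"
    using assms(1,2) unfolding dcpo_def by blast
  then have "dsup S = u"
    by (rule dsup_eqI)
  then show ?thesis
    using u assms(3) unfolding is_lub_in_def by blast
qed

lemma directed_image:
  assumes "directed S" and "mono_on S f"
  shows "directed (f ` S)"
  unfolding directed_def
proof (intro conjI ballI)
  show "f ` S \<noteq> {}"
    using assms(1) unfolding directed_def by blast
next
  fix x y assume "x \<in> f ` S" "y \<in> f ` S"
  then obtain s t where "s \<in> S" "t \<in> S" "x = f s" "y = f t"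
    by blast
  moreover obtain u where "u \<in> S" "s \<le> u" "t \<le> u"
    using assms(1) \<open>s \<in> S\<close> \<open>t \<in> S\<close> unfolding directed_def by blast
  ultimately show "\<exists>z\<in>f ` S. x \<le> z \<and> y \<le> z"
    using assms(2) by (blast dest: mono_onD)
qed

definition left_fibre_dsup_coherent :: "('a::order \<Rightarrow> 'a) \<Rightarrow> ('a \<Rightarrow> 'a) \<Rightarrow> bool" where
  "left_fibre_dsup_coherent left right \<longleftrightarrow>
     (\<forall>p\<in>maxD. \<forall>S. S \<subseteq> left -` {p} \<longrightarrow> directed S \<longrightarrow>
        left (dsup S) = p \<and>
        (\<forall>q\<in>maxD. \<forall>T. T \<subseteq> left -` {q} \<longrightarrow> directed T \<longrightarrow> right ` T = right ` S \<longrightarrow>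
           right (dsup S) = right (dsup T)))"

lemma interval_domain_dsup_coherent:
  assumes "interval_domain left right"
  shows "left_fibre_dsup_coherent left right" and "left_fibre_dsup_coherent right left"
  using assms unfolding interval_domain_def left_fibre_dsup_coherent_def
  by - (elim conjE, assumption)+

lemma interval_poset_swap:
  assumes "interval_poset left right"
  shows "interval_poset right left"
proof -
  have "has_meet x y \<and> right (meet x y) = right x \<and> left (meet x y) = left y"
    if "left x = right y" for x y
    using assms that[symmetric] unfolding interval_poset_def meet_commute[of x y]
      has_meet_commute[of x y] by blast
  then show ?thesis
    using assms unfolding interval_poset_def
    by (simp add: insert_commute meet_commute has_meet_commute)
qed

lemma max_inf_swap: "max_inf right left A m \<longleftrightarrow> max_sup left right A m"
  unfolding max_inf_def max_sup_def max_le_def by blast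

context
  fixes left right :: "'a::order \<Rightarrow> 'a"
  assumes ip: "interval_poset left right"
begin

lemma endpoints_maxD: "left x \<in> maxD" "right x \<in> maxD"
  using ip unfolding interval_poset_def by blast+

lemma endpoints_glb: "is_glb_in UNIV {left x, right x} x"
  using ip unfolding interval_poset_def by simp

lemma le_right: "x \<le> right x"
  using endpoints_glb unfolding is_glb_in_def by simp

lemma meet_endpoints: "meet (left z) (right z) = z"
  using endpoints_glb by (rule meet_eqI)

lemma max_le_meet:
  assumes "max_le left right a b"
  shows "left (meet a b) = a" and "right (meet a b) = b"
  using assms meet_endpoints unfolding max_le_def by auto

lemma max_le_right_of_le:
  assumes "p \<in> maxD" and "x \<le> p"
  shows "max_le left right p (right x)"
proof -
  have "left (meet p (right x)) = p \<and> right (meet p (right x)) = right x"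
    using ip assms unfolding interval_poset_def by blast
  then show ?thesis
    unfolding max_le_def using assms(1) endpoints_maxD by metis
qed

text \<open>The interval [n, b] is the meet of [n, c] and [c, b].\<close>

lemma meet_antimono_right:
  assumes nc: "max_le left right n c" and cb: "max_le left right c b"
  shows "meet n b \<le> meet n c"
proof -
  let ?m = "meet (meet n c) (meet c b)"
  have m: "has_meet (meet n c) (meet c b) \<and> left ?m = n \<and> right ?m = b"
    using ip max_le_meet[OF nc] max_le_meet[OF cb] unfolding interval_poset_def by metis
  then have "meet n b = ?m"
    using meet_endpoints[of ?m] by simp
  also have "?m \<le> meet n c"
    using m meet_lower1 by blast
  finally show ?thesis .
qed

lemma max_le_right_dsup:
  assumes "dcpo (UNIV :: 'a set)" and "directed S" and "s \<in> S"
  shows "max_le left right (right (dsup S)) (right s)"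
  using max_le_right_of_le endpoints_maxD dsup_upper[OF assms] le_right
  by (meson order_trans)

context
  assumes coherent: "left_fibre_dsup_coherent left right"
begin

lemma left_dsup_fibre:
  assumes "p \<in> maxD" and "S \<subseteq> left -` {p}" and "directed S"
  shows "left (dsup S) = p"
  using coherent assms unfolding left_fibre_dsup_coherent_def by blast

lemma right_dsup_eq:
  assumes "p \<in> maxD" and "S \<subseteq> left -` {p}" and "directed S"
    and "q \<in> maxD" and "T \<subseteq> left -` {q}" and "directed T" and "right ` T = right ` S"
  shows "right (dsup S) = right (dsup T)"
  using coherent assms unfolding left_fibre_dsup_coherent_def by blast

lemma max_le_right_dsup_greatest:
  assumes p: "p \<in> maxD" and S: "S \<subseteq> left -` {p}" "directed S"
    and n: "n \<in> maxD" and lower: "\<forall>s\<in>S. max_le left right n (right s)"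
  shows "max_le left right n (right (dsup S))"
proof -
  define w where "w s = meet n (right s)" for s
  have w_endpoints: "left (w s) = n" "right (w s) = right s" if "s \<in> S" for s
    using max_le_meet[of n "right s"] lower that unfolding w_def by simp_all
  have "mono_on S w"
  proof (rule mono_onI)
    fix s t assume "s \<in> S" "t \<in> S" "s \<le> t"
    then have "s \<le> right t"
      using le_right order_trans by blast
    then have "max_le left right (right t) (right s)"
      by (rule max_le_right_of_le[OF endpoints_maxD(2)])
    then show "w s \<le> w t"
      unfolding w_def using meet_antimono_right lower \<open>t \<in> S\<close> by blast
  qed
  then have T: "directed (w ` S)"
    using directed_image S(2) by blast
  have T_fibre: "w ` S \<subseteq> left -` {n}"
    using w_endpoints by auto
  have "right ` w ` S = right ` S"
    unfolding image_image using w_endpoints by simp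
  then have "left (dsup (w ` S)) = n" and "right (dsup S) = right (dsup (w ` S))"
    using left_dsup_fibre[OF n T_fibre T] right_dsup_eq[OF p S n T_fibre T] by simp_all
  then show ?thesis
    unfolding max_le_def using n endpoints_maxD(2) by (blast intro: sym)
qed

lemma right_dsup_max_inf:
  assumes dcpo: "dcpo (UNIV :: 'a set)"
    and fibre: "p \<in> maxD" "S \<subseteq> left -` {p}" "directed S"
  shows "max_inf left right (right ` S) (right (dsup S))"
  unfolding max_inf_def
proof (intro conjI ballI impI)
  show "right (dsup S) \<in> maxD"
    by (rule endpoints_maxD(2))
next
  fix a assume "a \<in> right ` S"
  then show "max_le left right (right (dsup S)) a"
    using max_le_right_dsup[OF dcpo fibre(3)] by blast
next
  fix n assume "n \<in> maxD" and "\<forall>a\<in>right ` S. max_le left right n a"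
  then show "max_le left right n (right (dsup S))"
    using max_le_right_dsup_greatest[OF fibre] by blast
qed

end

end

theorem mainTheorem10:
  fixes left right :: "'a::order \<Rightarrow> 'a" and p q :: 'a
  assumes "interval_domain left right"
    and "p \<in> maxD" and "q \<in> maxD"
  shows "(\<forall>S. S \<subseteq> left -` {p} \<longrightarrow> directed S \<longrightarrow>
            max_inf left right (right ` S) (right (dsup S))) \<and>
         (\<forall>S. S \<subseteq> right -` {q} \<longrightarrow> directed S \<longrightarrow>
            max_sup left right (left ` S) (left (dsup S)))"
proof -
  have ip: "interval_poset left right" and dcpo: "dcpo (UNIV :: 'a set)"
    using assms(1) unfolding interval_domain_def by blast+
  note coherent = interval_domain_dsup_coherent[OF assms(1)]
  show ?thesis
    using right_dsup_max_inf[OF ip coherent(1) dcpo assms(2)]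
      right_dsup_max_inf[OF interval_poset_swap[OF ip] coherent(2) dcpo assms(3)]
    by (simp add: max_inf_swap)
qed

end
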